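(* Let $(\Omega,\mathcal{F},\Pr)$ be a probability space with binary random variables $O_k,T_k$ indexed by a finite set $K$, and write $O=(O_k)_{k\in K}$. Assume the locality condition: for each $k\in K$ there is $h_k\in[0,1]$ with $\Pr(T_k=1\mid O=o)=h_k$ for every $o\in\{0,1\}^K$ with $o_k=0$ and $\Pr(O=o)>0$. Let $k_0\in K$ and let $K_1,\dots,K_j\subseteq K\setminus\{k_0\}$ be nonempty finite sets. Define the event $$H_0=\{O_{k_0}=0\}\ \vee\ \bigwedge_{i=1}^j\Big(\bigvee_{k\in K_i}\{O_k=0\}\Big),$$ assumed to have positive probability. Then $$\Pr\Big(\{T_{k_0}=1\}\wedge\bigvee_{i=1}^j\bigwedge_{k\in K_i}\{T_k=1\}\ \Big|\ H_0\Big)\le \max\Big\{h_{k_0},\ \sum_{i=1}^j \max_{k\in K_i} h_k\Big\}.$$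
   Context: $O_k=1$ means "oracle $k$ outputs $P_k$", $T_k=1$ means "test $k$ outputs $P_k$", and $h_k$ is the Type I error rate of test $k$. In the paper's application to an edge $A-C$ oriented by unshielded v-structures $A\to C\leftarrow \mathbf{B}_i$, $i=1,\dots,j$: $k_0$ corresponds to the adjacency $A-C$ and $K_i=\{$adjacency $\mathbf{B}_i-C$, collider condition $\gamma_{A\mathbf{B}_i|C}\}$, giving the bound $\max\{p_{A-C},\sum_{i=1}^j\max\{p_{\mathbf{B}_i-C},p_{\gamma_{A\mathbf{B}_i|C}}\}\}$; the orientation-rule bounds are analogous instances. *)

theory Defs
  imports "HOL-Probability.Probability"
begin

end

theory Submission
  imports Defs
begin

text \<open>Split the conditioning event \<open>H\<^sub>0\<close> into the atoms \<open>{O = o}\<close> of the oracle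
configuration. \<open>H\<^sub>0\<close> depends on \<open>O\<close> only, so it is a disjoint union of atoms, and it suffices
to bound the probability of the target event on each atom separately. If \<open>o\<close> satisfies
\<open>o k\<^sub>0 = 0\<close>, the target event is contained in \<open>{T\<^sub>k\<^sub>0 = 1}\<close>, which by locality has
conditional probability \<open>h\<^sub>k\<^sub>0\<close> on the atom. Otherwise every \<open>K\<^sub>i\<close> contains some \<open>k\<^sub>i\<close>
with \<open>o k\<^sub>i = 0\<close>, the target event lies in \<open>\<Union>\<^sub>i {T\<^sub>k\<^sub>i = 1}\<close>, and the union bound
together with locality gives \<open>\<Sum>\<^sub>i h\<^sub>k\<^sub>i \<le> \<Sum>\<^sub>i max\<^sub>k\<^sub>\<in>\<^sub>K\<^sub>i h\<^sub>k\<close>.\<close>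

lemma (in prob_space) prob_Int_le_of_finite_partition:
  assumes "finite I" "disjoint_family_on A I" "A ` I \<subseteq> events" "E \<in> events"
    and bound: "\<And>i. i \<in> I \<Longrightarrow> prob (E \<inter> A i) \<le> B * prob (A i)"
  shows "prob (E \<inter> (\<Union>i\<in>I. A i)) \<le> B * prob (\<Union>i\<in>I. A i)"
proof -
  have "disjoint_family_on (\<lambda>i. E \<inter> A i) I"
    using assms(2) by (auto simp: disjoint_family_on_def)
  moreover have "(\<lambda>i. E \<inter> A i) ` I \<subseteq> events"
    using assms(3,4) by blast
  ultimately have "prob (\<Union>i\<in>I. E \<inter> A i) = (\<Sum>i\<in>I. prob (E \<inter> A i))"
    using assms(1) by (intro finite_measure_finite_Union)
  then have "prob (E \<inter> (\<Union>i\<in>I. A i)) = (\<Sum>i\<in>I. prob (E \<inter> A i))"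
    by (simp only: Int_UN_distrib)
  also have "\<dots> \<le> (\<Sum>i\<in>I. B * prob (A i))"
    using bound by (rule sum_mono)
  also have "\<dots> = B * prob (\<Union>i\<in>I. A i)"
    by (simp only: finite_measure_finite_Union[OF assms(1,3,2)] sum_distrib_left)
  finally show ?thesis .
qed

lemma (in prob_space) prob_conj_eq_cond_prob_mult:
  assumes "\<P>(\<omega> in M. Q \<omega>) > 0"
  shows "\<P>(\<omega> in M. P \<omega> \<and> Q \<omega>) = \<P>(\<omega> in M. P \<omega> \<bar> Q \<omega>) * \<P>(\<omega> in M. Q \<omega>)"
  using assms by (simp add: cond_prob_def)

locale local_tests = prob_space M
  for M :: "'a measure" and K :: "'k set" and Or Te :: "'k \<Rightarrow> 'a \<Rightarrow> bool"
    and h :: "'k \<Rightarrow> real" +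
  assumes finite_K: "finite K"
    and sets_Or: "\<And>k. k \<in> K \<Longrightarrow> {\<omega> \<in> space M. Or k \<omega>} \<in> sets M"
    and sets_Te: "\<And>k. k \<in> K \<Longrightarrow> {\<omega> \<in> space M. Te k \<omega>} \<in> sets M"
    and locality: "\<And>k o'. k \<in> K \<Longrightarrow> \<not> o' k \<Longrightarrow>
        \<P>(\<omega> in M. \<forall>l\<in>K. Or l \<omega> = o' l) > 0 \<Longrightarrow>
        \<P>(\<omega> in M. Te k \<omega> \<bar> \<forall>l\<in>K. Or l \<omega> = o' l) = h k"
begin

definition outcome :: "'a \<Rightarrow> 'k \<Rightarrow> bool"
  where "outcome \<omega> = restrict (\<lambda>l. Or l \<omega>) K"

definition outcome_event :: "('k \<Rightarrow> bool) \<Rightarrow> 'a set"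
  where "outcome_event o' = {\<omega> \<in> space M. \<forall>l\<in>K. Or l \<omega> = o' l}"

definition test_event :: "'k \<Rightarrow> 'a set"
  where "test_event k = {\<omega> \<in> space M. Te k \<omega>}"

lemma pred_Te: "k \<in> K \<Longrightarrow> Measurable.pred M (Te k)"
  using sets_Te by (simp add: pred_def)

lemma outcome_in_configurations: "outcome \<omega> \<in> K \<rightarrow>\<^sub>E UNIV"
  by (simp add: outcome_def)

lemma outcome_apply: "k \<in> K \<Longrightarrow> outcome \<omega> k = Or k \<omega>"
  by (simp add: outcome_def)

lemma sets_outcome_event: "outcome_event o' \<in> events"
proof -
  have "Measurable.pred M (\<lambda>\<omega>. \<forall>l\<in>K. Or l \<omega> = o' l)"
    using finite_K sets_Or by (intro pred_intros_finite pred_intros_logic) (auto simp: pred_def)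
  then show ?thesis
    by (simp add: outcome_event_def pred_def)
qed

lemma outcome_event_eq:
  assumes "o' \<in> K \<rightarrow>\<^sub>E UNIV"
  shows "outcome_event o' = {\<omega> \<in> space M. outcome \<omega> = o'}"
  using assms by (auto simp: outcome_event_def outcome_def fun_eq_iff PiE_iff extensional_def)

lemma prob_test_outcome_event:
  assumes "k \<in> K" "\<not> o' k"
  shows "prob (test_event k \<inter> outcome_event o') = h k * prob (outcome_event o')"
proof (cases "prob (outcome_event o') = 0")
  case True
  then show ?thesis
    using finite_measure_mono[OF Int_lower2 sets_outcome_event, of "test_event k" o']
      measure_nonneg[of M "test_event k \<inter> outcome_event o'"] by simp
next
  case False
  with measure_nonneg[of M "outcome_event o'"] have "prob (outcome_event o') > 0"
    by linarith
  then have pos: "\<P>(\<omega> in M. \<forall>l\<in>K. Or l \<omega> = o' l) > 0"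
    by (simp add: outcome_event_def)
  have "test_event k \<inter> outcome_event o' = {\<omega> \<in> space M. Te k \<omega> \<and> (\<forall>l\<in>K. Or l \<omega> = o' l)}"
    by (auto simp: test_event_def outcome_event_def)
  with prob_conj_eq_cond_prob_mult[OF pos, of "Te k"] show ?thesis
    by (simp add: locality[OF assms pos] outcome_event_def)
qed

lemma prob_test_union_outcome_event_le:
  assumes "finite I" "\<And>i. i \<in> I \<Longrightarrow> g i \<in> K \<and> \<not> o' (g i)"
  shows "prob ((\<Union>i\<in>I. test_event (g i)) \<inter> outcome_event o')
           \<le> (\<Sum>i\<in>I. h (g i)) * prob (outcome_event o')"
proof -
  have sets: "test_event (g i) \<inter> outcome_event o' \<in> events" if "i \<in> I" for i
    using assms(2)[OF that] sets_Te sets_outcome_event by (auto simp: test_event_def)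
  have "prob ((\<Union>i\<in>I. test_event (g i)) \<inter> outcome_event o')
      = prob (\<Union>i\<in>I. test_event (g i) \<inter> outcome_event o')"
    by (intro arg_cong[where f = prob]) blast
  also have "\<dots> \<le> (\<Sum>i\<in>I. prob (test_event (g i) \<inter> outcome_event o'))"
    using assms(1) sets by (intro finite_measure_subadditive_finite) auto
  also have "\<dots> = (\<Sum>i\<in>I. h (g i) * prob (outcome_event o'))"
    using assms(2) by (intro sum.cong) (auto simp: prob_test_outcome_event)
  finally show ?thesis
    by (simp add: sum_distrib_right)
qed

lemma prob_le_of_outcome_events:
  assumes "E \<in> events"
    and bound: "\<And>o'. o' \<in> K \<rightarrow>\<^sub>E UNIV \<Longrightarrow> c o' \<Longrightarrow>
        prob (E \<inter> outcome_event o') \<le> B * prob (outcome_event o')"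
  shows "prob (E \<inter> {\<omega> \<in> space M. c (outcome \<omega>)})
           \<le> B * prob {\<omega> \<in> space M. c (outcome \<omega>)}"
proof -
  let ?C = "{o' \<in> K \<rightarrow>\<^sub>E UNIV. c o'}"
  have "finite ?C"
    by (rule finite_subset[of _ "K \<rightarrow>\<^sub>E UNIV"]) (auto intro: finite_PiE finite_K)
  moreover have "disjoint_family_on outcome_event ?C"
    unfolding disjoint_family_on_def
  proof (intro ballI impI)
    fix a b
    assume "a \<in> ?C" "b \<in> ?C" "a \<noteq> b"
    then show "outcome_event a \<inter> outcome_event b = {}"
      by (auto simp: outcome_event_eq)
  qed
  ultimately have "prob (E \<inter> (\<Union>o'\<in>?C. outcome_event o')) \<le> B * prob (\<Union>o'\<in>?C. outcome_event o')"
    using assms sets_outcome_event by (intro prob_Int_le_of_finite_partition) auto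
  moreover have "{\<omega> \<in> space M. c (outcome \<omega>)} = (\<Union>o'\<in>?C. outcome_event o')"
    using outcome_in_configurations by (auto simp: outcome_event_eq)
  ultimately show ?thesis
    by simp
qed

lemma prob_oriented_edge_outcome_event_le:
  assumes "finite I" "k0 \<in> K" "\<And>i. i \<in> I \<Longrightarrow> Ks i \<subseteq> K"
    and config: "\<not> o' k0 \<or> (\<forall>i\<in>I. \<exists>k\<in>Ks i. \<not> o' k)"
  shows "prob ({\<omega> \<in> space M. Te k0 \<omega> \<and> (\<exists>i\<in>I. \<forall>k\<in>Ks i. Te k \<omega>)} \<inter> outcome_event o')
           \<le> max (h k0) (\<Sum>i\<in>I. Max (h ` Ks i)) * prob (outcome_event o')"
    (is "prob (?E \<inter> ?A) \<le> ?B * prob ?A")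
proof (cases "o' k0")
  case False
  have "prob (?E \<inter> ?A) \<le> prob (test_event k0 \<inter> ?A)"
    using assms(2) sets_Te sets_outcome_event
    by (intro finite_measure_mono) (auto simp: test_event_def)
  also have "\<dots> = h k0 * prob ?A"
    using assms(2) False by (rule prob_test_outcome_event)
  also have "\<dots> \<le> ?B * prob ?A"
    by (intro mult_right_mono) auto
  finally show ?thesis .
next
  case True
  with config obtain g where g: "\<And>i. i \<in> I \<Longrightarrow> g i \<in> Ks i \<and> \<not> o' (g i)"
    by metis
  have finite_Ks: "finite (Ks i)" if "i \<in> I" for i
    using assms(3)[OF that] finite_K by (rule finite_subset)
  have "?E \<inter> ?A \<subseteq> (\<Union>i\<in>I. test_event (g i)) \<inter> ?A"
    unfolding test_event_def using g by blast
  moreover have "(\<Union>i\<in>I. test_event (g i)) \<inter> ?A \<in> events"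
    using g assms(3) sets_Te
    by (intro sets.Int sets.finite_UN assms(1) sets_outcome_event) (auto simp: test_event_def)
  ultimately have "prob (?E \<inter> ?A) \<le> prob ((\<Union>i\<in>I. test_event (g i)) \<inter> ?A)"
    by (rule finite_measure_mono)
  also have "\<dots> \<le> (\<Sum>i\<in>I. h (g i)) * prob ?A"
    using g assms(1,3) by (intro prob_test_union_outcome_event_le) auto
  also have "\<dots> \<le> ?B * prob ?A"
    using g finite_Ks by (intro mult_right_mono max.coboundedI2 sum_mono Max_ge) auto
  finally show ?thesis .
qed

end

theorem mainTheorem4:
  fixes M :: "'a measure"
    and K :: "'k set"
    and Or Te :: "'k \<Rightarrow> 'a \<Rightarrow> bool"
    and h :: "'k \<Rightarrow> real"
    and k0 :: 'k
    and j :: nat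
    and Ks :: "nat \<Rightarrow> 'k set"
  assumes "prob_space M"
    and "finite K"
    and measO: "\<And>k. k \<in> K \<Longrightarrow> {\<omega> \<in> space M. Or k \<omega>} \<in> sets M"
    and measT: "\<And>k. k \<in> K \<Longrightarrow> {\<omega> \<in> space M. Te k \<omega>} \<in> sets M"
    and h_range: "\<And>k. k \<in> K \<Longrightarrow> 0 \<le> h k \<and> h k \<le> 1"
    and locality: "\<And>k o'. k \<in> K \<Longrightarrow> \<not> o' k \<Longrightarrow>
        \<P>(\<omega> in M. \<forall>l\<in>K. Or l \<omega> = o' l) > 0 \<Longrightarrow>
        \<P>(\<omega> in M. Te k \<omega> \<bar> \<forall>l\<in>K. Or l \<omega> = o' l) = h k"
    and "k0 \<in> K"
    and "j \<ge> 1"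
    and Ks_sub: "\<And>i. i \<in> {1..j} \<Longrightarrow> Ks i \<subseteq> K - {k0}"
    and Ks_ne: "\<And>i. i \<in> {1..j} \<Longrightarrow> Ks i \<noteq> {}"
    and H0_pos: "\<P>(\<omega> in M. \<not> Or k0 \<omega> \<or> (\<forall>i\<in>{1..j}. \<exists>k\<in>Ks i. \<not> Or k \<omega>)) > 0"
  shows "\<P>(\<omega> in M. Te k0 \<omega> \<and> (\<exists>i\<in>{1..j}. \<forall>k\<in>Ks i. Te k \<omega>)
            \<bar> \<not> Or k0 \<omega> \<or> (\<forall>i\<in>{1..j}. \<exists>k\<in>Ks i. \<not> Or k \<omega>))
         \<le> max (h k0) (\<Sum>i=1..j. Max (h ` Ks i))"
proof -
  interpret local_tests M K Or Te h
    by (intro local_tests.intro local_tests_axioms.intro \<open>prob_space M\<close> \<open>finite K\<close>)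
      (rule measO measT locality; assumption)+
  define c where "c o' \<longleftrightarrow> \<not> o' k0 \<or> (\<forall>i\<in>{1..j}. \<exists>k\<in>Ks i. \<not> o' k)" for o' :: "'k \<Rightarrow> bool"
  define E where "E = {\<omega> \<in> space M. Te k0 \<omega> \<and> (\<exists>i\<in>{1..j}. \<forall>k\<in>Ks i. Te k \<omega>)}"
  define H where "H = {\<omega> \<in> space M. c (outcome \<omega>)}"
  have Ks_K: "i \<in> {1..j} \<Longrightarrow> Ks i \<subseteq> K" for i
    using Ks_sub by blast
  have H_eq: "{\<omega> \<in> space M. \<not> Or k0 \<omega> \<or> (\<forall>i\<in>{1..j}. \<exists>k\<in>Ks i. \<not> Or k \<omega>)} = H"
    using \<open>k0 \<in> K\<close> Ks_K by (auto simp: H_def c_def outcome_apply subset_iff)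
  have EH_eq: "{\<omega> \<in> space M. (Te k0 \<omega> \<and> (\<exists>i\<in>{1..j}. \<forall>k\<in>Ks i. Te k \<omega>))
      \<and> (\<not> Or k0 \<omega> \<or> (\<forall>i\<in>{1..j}. \<exists>k\<in>Ks i. \<not> Or k \<omega>))} = E \<inter> H"
    unfolding H_eq[symmetric] E_def by blast
  have "Measurable.pred M (\<lambda>\<omega>. Te k0 \<omega> \<and> (\<exists>i\<in>{1..j}. \<forall>k\<in>Ks i. Te k \<omega>))"
    using \<open>k0 \<in> K\<close> Ks_K finite_subset[OF Ks_K \<open>finite K\<close>]
    by (intro pred_intros_finite pred_intros_logic finite_atLeastAtMost) (auto intro: pred_Te)
  then have "E \<in> events"
    by (simp add: E_def pred_def)
  then have "prob (E \<inter> H) \<le> max (h k0) (\<Sum>i=1..j. Max (h ` Ks i)) * prob H"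
    using \<open>k0 \<in> K\<close> Ks_K unfolding E_def H_def c_def
    by (intro prob_le_of_outcome_events prob_oriented_edge_outcome_event_le) auto
  moreover have "prob H > 0"
    using H0_pos unfolding H_eq .
  ultimately show ?thesis
    unfolding cond_prob_def H_eq EH_eq by (simp add: pos_divide_le_eq)
qed

end
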